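(* Let $n\ge 5$. For every integer $k$ with $1\le k\le\lfloor\frac{n-1}{2}\rfloor$ there exists a Latin square of order $n$ with inner distance $k$. Moreover, for any Latin square $L$ of order $n$ with inner distance $k$ and any integer $k'$ with $1\le k'<k$, there is a permutation $\sigma$ of $[1,n]$ such that $\sigma(L)$ has inner distance $k'$.
   Context: Symbols are $[1,n]$. For $a,b\in[1,n]$, $\mathrm{dist}(a,b)$ is the minimum of the residues of $a-b$ and $b-a$ modulo $n$ (in $[0,n-1]$). A Latin square of order $n$ is an $n\times n$ matrix over $[1,n]$ with each symbol exactly once in every row and column; its inner distance is the minimum of $\mathrm{dist}$ over symbols in horizontally or vertically adjacent cells. For a permutation $\sigma$ of $[1,n]$, $\sigma(L)$ is obtained by applying $\sigma$ to every entry of $L$. *)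

theory Defs
  imports Main "HOL-Combinatorics.Permutations"
begin

definition cdist :: "nat \<Rightarrow> nat \<Rightarrow> nat \<Rightarrow> nat" where
  "cdist n a b = nat (min ((int a - int b) mod int n) ((int b - int a) mod int n))"

text \<open>Entries outside the index range are irrelevant.\<close>
definition latin_square :: "nat \<Rightarrow> (nat \<Rightarrow> nat \<Rightarrow> nat) \<Rightarrow> bool" where
  "latin_square n L \<longleftrightarrow>
     (\<forall>i\<in>{1..n}. bij_betw (\<lambda>j. L i j) {1..n} {1..n}) \<and>
     (\<forall>j\<in>{1..n}. bij_betw (\<lambda>i. L i j) {1..n} {1..n})"

definition adjacent_cells :: "nat \<Rightarrow> ((nat \<times> nat) \<times> (nat \<times> nat)) set" where
  "adjacent_cells n =
     {((i, j), (i, j + 1)) | i j. i \<in> {1..n} \<and> j \<in> {1..n} \<and> j + 1 \<le> n} \<union>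
     {((i, j), (i + 1, j)) | i j. i \<in> {1..n} \<and> j \<in> {1..n} \<and> i + 1 \<le> n}"

definition inner_distance :: "nat \<Rightarrow> (nat \<Rightarrow> nat \<Rightarrow> nat) \<Rightarrow> nat" where
  "inner_distance n L =
     Min ((\<lambda>((i, j), (i', j')). cdist n (L i j) (L i' j')) ` adjacent_cells n)"

end

(*
  Swapping two symbols b and c at cyclic distance at most 1 changes the cyclic distance of any
  two symbols by at most 1: if both symbols move, they are b and c themselves. Take adjacent cells
  with symbols a, b at the minimal distance k >= 2 and let c be the neighbour of b on the side of
  a; after the swap the cells carry a and c, at distance k - 1, which is therefore the new inner
  distance. Iterating lowers the inner distance to any k' >= 1, so for the existence part it
  suffices to reach the maximum (n - 1) div 2. This is done by the addition table
  L i j = z i + z j (mod n), where z lists the residues mod n so that consecutive entries are at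
  cyclic distance n div 2 or (n - 1) div 2: for odd n, z t = t * (n div 2); for even n,
  z = 0, n/2, 1, n/2 + 1, 2, ...
*)
theory Submission
  imports Defs "HOL-Number_Theory.Cong"
begin

definition cyclic_norm :: "nat \<Rightarrow> int \<Rightarrow> int" where
  "cyclic_norm n z = min (z mod int n) ((- z) mod int n)"

lemma cdist_eq_cyclic_norm: "cdist n a b = nat (cyclic_norm n (int a - int b))"
  by (simp add: cdist_def cyclic_norm_def)

lemma cyclic_norm_nonneg: "n > 0 \<Longrightarrow> 0 \<le> cyclic_norm n z"
  by (simp add: cyclic_norm_def)

lemma cyclic_norm_cong: "z mod int n = w mod int n \<Longrightarrow> cyclic_norm n z = cyclic_norm n w"
  unfolding cyclic_norm_def by (metis mod_minus_eq)

lemma cyclic_norm_uminus: "cyclic_norm n (- z) = cyclic_norm n z"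
  by (simp add: cyclic_norm_def min.commute)

lemma cyclic_norm_eq_min:
  assumes "0 \<le> z" "z < int n"
  shows "cyclic_norm n z = min z (int n - z)"
  using assms by (cases "z = 0") (simp_all add: cyclic_norm_def zmod_zminus1_eq_if)

lemma cyclic_norm_le_abs: "n > 0 \<Longrightarrow> cyclic_norm n z \<le> \<bar>z\<bar>"
  by (cases "z \<ge> 0")
     (simp_all add: cyclic_norm_def min.coboundedI1 min.coboundedI2 zmod_le_nonneg_dividend)

lemma cyclic_norm_attained:
  assumes "n > 0"
  obtains w where "w mod int n = z mod int n" "\<bar>w\<bar> = cyclic_norm n z"
proof (cases "z mod int n \<le> (- z) mod int n")
  case True
  then show ?thesis
    using assms by (intro that[of "z mod int n"]) (simp_all add: cyclic_norm_def)
next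
  case False
  then show ?thesis
    using assms
    by (intro that[of "- ((- z) mod int n)"]) (simp_all add: cyclic_norm_def mod_minus_eq)
qed

lemma cyclic_norm_triangle:
  assumes "n > 0"
  shows "cyclic_norm n (x + y) \<le> cyclic_norm n x + cyclic_norm n y"
proof -
  obtain v where v: "v mod int n = x mod int n" "\<bar>v\<bar> = cyclic_norm n x"
    using cyclic_norm_attained[OF assms] .
  obtain w where w: "w mod int n = y mod int n" "\<bar>w\<bar> = cyclic_norm n y"
    using cyclic_norm_attained[OF assms] .
  have "cyclic_norm n (x + y) = cyclic_norm n (v + w)"
    using v(1) w(1) by (intro cyclic_norm_cong mod_add_cong) simp_all
  also have "\<dots> \<le> \<bar>v + w\<bar>"
    using cyclic_norm_le_abs[OF assms] .
  finally show ?thesis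
    using v(2) w(2) by linarith
qed

lemma cyclic_norm_decrement:
  assumes "n > 0" "0 < cyclic_norm n z"
  obtains e where "\<bar>e\<bar> = 1" "cyclic_norm n (z - e) = cyclic_norm n z - 1"
proof -
  obtain w where w: "w mod int n = z mod int n" "\<bar>w\<bar> = cyclic_norm n z"
    using cyclic_norm_attained[OF assms(1)] .
  \<comment> \<open>step from the representative of least absolute value towards 0\<close>
  define e where "e = sgn w"
  have e: "\<bar>e\<bar> = 1" "\<bar>w - e\<bar> = \<bar>w\<bar> - 1"
    using w(2) assms(2) by (auto simp: e_def sgn_if)
  have "cyclic_norm n (z - e) = cyclic_norm n (w - e)"
    using w(1) by (intro cyclic_norm_cong mod_diff_cong) simp_all
  also have "\<dots> \<le> \<bar>w\<bar> - 1"
    using cyclic_norm_le_abs[OF assms(1)] e(2) by metis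
  finally have upper: "cyclic_norm n (z - e) \<le> cyclic_norm n z - 1"
    using w(2) by simp
  have "cyclic_norm n z \<le> cyclic_norm n (z - e) + cyclic_norm n e"
    using cyclic_norm_triangle[OF assms(1), of "z - e" e] by simp
  also have "cyclic_norm n e \<le> 1"
    using cyclic_norm_le_abs[OF assms(1)] e(1) by metis
  finally show ?thesis
    using upper e(1) that by simp
qed

lemma cdist_self [simp]: "cdist n a a = 0"
  by (simp add: cdist_def)

lemma cdist_commute: "cdist n a b = cdist n b a"
  by (simp add: cdist_def min.commute)

lemma cdist_triangle: "n > 0 \<Longrightarrow> cdist n a c \<le> cdist n a b + cdist n b c"
  using cyclic_norm_triangle[of n "int a - int b" "int b - int c"] cyclic_norm_nonneg[of n]
  by (simp add: cdist_eq_cyclic_norm nat_add_distrib[symmetric])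

lemma cdist_add_left: "cdist n (c + a) (c + b) = cdist n a b"
  by (simp add: cdist_def)

lemma cdist_Suc_mod: "cdist n (Suc (a mod n)) (Suc (b mod n)) = cdist n a b"
  unfolding cdist_eq_cyclic_norm
  by (rule arg_cong[where f = nat], rule cyclic_norm_cong) (simp add: of_nat_mod mod_diff_eq)

lemma cdist_step_towards:
  assumes "n > 0" "0 < cdist n a b"
  obtains c where "c \<in> {1..n}" "cdist n b c \<le> 1" "cdist n a c = cdist n a b - 1"
proof -
  have pos: "0 < cyclic_norm n (int a - int b)"
    using assms(2) by (simp add: cdist_eq_cyclic_norm)
  then obtain e where e: "\<bar>e\<bar> = 1"
      "cyclic_norm n (int a - int b - e) = cyclic_norm n (int a - int b) - 1"
    using cyclic_norm_decrement[OF assms(1)] by blast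
  define c where "c = nat ((int b + e - 1) mod int n) + 1"
  have c_mod: "int c mod int n = (int b + e) mod int n"
    using assms(1) by (simp add: c_def mod_add_right_eq)
  have "c \<in> {1..n}"
    using assms(1) pos_mod_bound[of "int n" "int b + e - 1"]
    by (simp add: c_def Suc_le_eq nat_less_iff)
  moreover have "cdist n b c \<le> 1"
  proof -
    have "cyclic_norm n (int b - int c) = cyclic_norm n (int b - (int b + e))"
      using c_mod by (intro cyclic_norm_cong mod_diff_cong) simp_all
    then show ?thesis
      using cyclic_norm_le_abs[OF assms(1), of "- e"] e(1) by (simp add: cdist_eq_cyclic_norm)
  qed
  moreover have "cdist n a c = cdist n a b - 1"
  proof -
    have "cyclic_norm n (int a - int c) = cyclic_norm n (int a - (int b + e))"
      using c_mod by (intro cyclic_norm_cong mod_diff_cong) simp_all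
    then show ?thesis
      using e(2) pos by (simp add: cdist_eq_cyclic_norm nat_diff_distrib diff_diff_eq)
  qed
  ultimately show ?thesis
    using that by blast
qed

lemma cdist_transpose:
  assumes "n > 0" "cdist n b c \<le> 1"
  shows "cdist n x y \<le> cdist n (transpose b c x) (transpose b c y) + 1"
proof -
  have moved: "cdist n z (transpose b c z) \<le> 1" for z
    using assms(2) by (cases "z = b \<or> z = c") (auto simp: cdist_commute)
  consider "transpose b c x = x" | "transpose b c y = y" | "{x, y} \<subseteq> {b, c}"
    using transpose_apply_other[of x b c] transpose_apply_other[of y b c] by blast
  then show ?thesis
  proof cases
    case 1
    then show ?thesis
      using cdist_triangle[OF assms(1), where a = x and b = "transpose b c y" and c = y] moved[of y]
        cdist_commute[of n y "transpose b c y"]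
      by (simp only: 1)
  next
    case 2
    then show ?thesis
      using cdist_triangle[OF assms(1), where a = x and b = "transpose b c x" and c = y] moved[of x]
      by simp
  next
    case 3
    then have "cdist n x y \<le> 1"
      using assms(2) by (auto simp: cdist_commute)
    then show ?thesis
      by simp
  qed
qed

lemma inner_distance_eq_iff:
  assumes "n \<ge> 2"
  shows "inner_distance n L = k \<longleftrightarrow>
    (\<forall>i j i' j'. ((i, j), (i', j')) \<in> adjacent_cells n \<longrightarrow> k \<le> cdist n (L i j) (L i' j')) \<and>
    (\<exists>i j i' j'. ((i, j), (i', j')) \<in> adjacent_cells n \<and> cdist n (L i j) (L i' j') = k)"
proof -
  let ?dist = "\<lambda>((i, j), (i', j')). cdist n (L i j) (L i' j')"
  have "finite (adjacent_cells n)"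
    by (rule finite_subset[of _ "({1..n} \<times> {1..n}) \<times> ({1..n} \<times> {1..n})"])
       (auto simp: adjacent_cells_def)
  moreover have "((1, 1), (1, 2)) \<in> adjacent_cells n"
    using assms by (auto simp: adjacent_cells_def)
  ultimately have "inner_distance n L = k \<longleftrightarrow>
      k \<in> ?dist ` adjacent_cells n \<and> (\<forall>d \<in> ?dist ` adjacent_cells n. k \<le> d)"
    unfolding inner_distance_def by (intro Min_eq_iff) auto
  also have "\<dots> \<longleftrightarrow>
      (\<exists>x \<in> adjacent_cells n. ?dist x = k) \<and> (\<forall>x \<in> adjacent_cells n. k \<le> ?dist x)"
    by blast
  finally show ?thesis
    by (simp add: Bex_def Ball_def split_paired_all) blast
qed

lemma latin_square_in_range:
  "latin_square n L \<Longrightarrow> i \<in> {1..n} \<Longrightarrow> j \<in> {1..n} \<Longrightarrow> L i j \<in> {1..n}"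
  unfolding latin_square_def by (metis bij_betw_apply)

lemma latin_square_permute:
  assumes "latin_square n L" "\<sigma> permutes {1..n}"
  shows "latin_square n (\<lambda>i j. \<sigma> (L i j))"
  using assms bij_betw_trans[OF _ permutes_imp_bij[OF assms(2)]]
  unfolding latin_square_def by (simp add: comp_def) blast

lemma inner_distance_decrement:
  assumes n: "n \<ge> 2" and L: "latin_square n L" "inner_distance n L = Suc k" and k: "k \<ge> 1"
  obtains \<sigma> where "\<sigma> permutes {1..n}" "inner_distance n (\<lambda>i j. \<sigma> (L i j)) = k"
proof -
  obtain i j i' j' where adj: "((i, j), (i', j')) \<in> adjacent_cells n"
    and dist_ab: "cdist n (L i j) (L i' j') = Suc k"
    using L(2) inner_distance_eq_iff[OF n] by blast
  define a b where "a = L i j" and "b = L i' j'"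
  have "b \<in> {1..n}"
    using adj latin_square_in_range[OF L(1)] by (auto simp: b_def adjacent_cells_def)
  obtain c where c: "c \<in> {1..n}" "cdist n b c \<le> 1" "cdist n a c = k"
    using cdist_step_towards[of n a b] n dist_ab by (auto simp: a_def b_def)
  define \<sigma> where "\<sigma> = transpose b c"
  have "\<sigma> permutes {1..n}"
    unfolding \<sigma>_def using \<open>b \<in> {1..n}\<close> c(1) by (rule permutes_swap_id)
  moreover have "inner_distance n (\<lambda>i j. \<sigma> (L i j)) = k"
    unfolding inner_distance_eq_iff[OF n]
  proof (intro conjI allI impI)
    fix p q p' q' assume "((p, q), (p', q')) \<in> adjacent_cells n"
    then have "Suc k \<le> cdist n (L p q) (L p' q')"
      using L(2) inner_distance_eq_iff[OF n] by blast
    then show "k \<le> cdist n (\<sigma> (L p q)) (\<sigma> (L p' q'))"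
      using cdist_transpose[of n b c "L p q" "L p' q'"] n c(2) by (simp add: \<sigma>_def)
  next
    have "a \<noteq> b" "a \<noteq> c"
      using dist_ab c(3) k by (auto simp: a_def b_def)
    then have "cdist n (\<sigma> a) (\<sigma> b) = k"
      using c(3) by (simp add: \<sigma>_def)
    then show "\<exists>i j i' j'. ((i, j), (i', j')) \<in> adjacent_cells n \<and>
        cdist n (\<sigma> (L i j)) (\<sigma> (L i' j')) = k"
      using adj by (auto simp: a_def b_def)
  qed
  ultimately show ?thesis
    using that by blast
qed

lemma inner_distance_reduce:
  assumes n: "n \<ge> 2"
    and "latin_square n L" "inner_distance n L = k" "1 \<le> k'" "k' < k"
  shows "\<exists>\<sigma>. \<sigma> permutes {1..n} \<and> inner_distance n (\<lambda>i j. \<sigma> (L i j)) = k'"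
  using assms(2-)
proof (induction k arbitrary: L)
  case 0
  then show ?case by simp
next
  case (Suc k)
  obtain \<sigma> where \<sigma>: "\<sigma> permutes {1..n}" "inner_distance n (\<lambda>i j. \<sigma> (L i j)) = k"
    using inner_distance_decrement[OF n Suc.prems(1,2)] Suc.prems(3,4) by auto
  show ?case
  proof (cases "k = k'")
    case True
    then show ?thesis
      using \<sigma> by blast
  next
    case False
    then obtain \<tau> where \<tau>: "\<tau> permutes {1..n}" "inner_distance n (\<lambda>i j. \<tau> (\<sigma> (L i j))) = k'"
      using Suc.IH[OF latin_square_permute[OF Suc.prems(1) \<sigma>(1)] \<sigma>(2) Suc.prems(3)]
        Suc.prems(4) by auto
    then show ?thesis
      using permutes_compose[OF \<sigma>(1) \<tau>(1), unfolded comp_def] by blast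
  qed
qed

definition zigzag :: "nat \<Rightarrow> nat \<Rightarrow> nat" where
  "zigzag n t = (if odd n then t * (n div 2) mod n else t div 2 + t mod 2 * (n div 2))"

lemma zigzag_less:
  assumes "n > 0" "t < n"
  shows "zigzag n t < n"
proof (cases "odd n")
  case False
  then obtain h where "n = 2 * h"
    by (auto elim: evenE)
  moreover have "t mod 2 = 0 \<or> t mod 2 = 1"
    by auto
  ultimately show ?thesis
    using assms(2) by (auto simp: zigzag_def)
qed (simp add: zigzag_def assms(1))

lemma inj_on_zigzag: "inj_on (zigzag n) {..<n}"
proof (cases "odd n")
  case True
  then obtain h where n: "n = Suc (2 * h)"
    by (auto elim: oddE)
  have "coprime h n"
    using n by (metis coprime_Suc_right_nat coprime_mult_left_iff)
  then show ?thesis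
    using n cong_mult_rcancel_nat[of h n] cong_less_modulus_unique_nat[of _ _ n]
    by (intro inj_onI) (simp add: zigzag_def cong_def)
next
  case False
  then obtain h where n: "n = 2 * h"
    by (auto elim: evenE)
  show ?thesis
  proof (intro inj_onI)
    fix t u assume "t \<in> {..<n}" "u \<in> {..<n}" "zigzag n t = zigzag n u"
    then have "t div 2 < h" "u div 2 < h" "t div 2 + t mod 2 * h = u div 2 + u mod 2 * h"
      using n by (auto simp: zigzag_def)
    then have "t mod 2 = u mod 2" "t div 2 = u div 2"
      by (auto simp: mod2_eq_if split: if_splits)
    then show "t = u"
      by (metis div_mult_mod_eq)
  qed
qed

lemma cdist_zigzag_Suc:
  assumes "n > 0"
  shows "cdist n (zigzag n t) (zigzag n (Suc t)) =
    (if even n \<and> even t then n div 2 else (n - 1) div 2)"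
proof (cases "odd n")
  case True
  define h where "h = n div 2"
  have "cyclic_norm n (int (zigzag n t) - int (zigzag n (Suc t))) = cyclic_norm n (- int h)"
    using True
    by (intro cyclic_norm_cong) (simp add: zigzag_def h_def of_nat_mod mod_diff_eq algebra_simps)
  also have "\<dots> = int h"
    using assms True cyclic_norm_eq_min[of "int h" n] by (simp add: cyclic_norm_uminus h_def)
  finally show ?thesis
    using True by (auto simp: cdist_eq_cyclic_norm h_def elim!: oddE)
next
  case False
  then obtain h where n: "n = 2 * h" "h > 0"
    using assms by (auto elim: evenE)
  show ?thesis
  proof (cases "even t")
    case True
    then have "int (zigzag n t) - int (zigzag n (Suc t)) = - int h"
      using n by (auto simp: zigzag_def elim!: evenE)
    then show ?thesis
      using n True cyclic_norm_eq_min[of "int h" n]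
      by (simp add: cdist_eq_cyclic_norm cyclic_norm_uminus)
  next
    case False
    then have "int (zigzag n t) - int (zigzag n (Suc t)) = int h - 1"
      using n by (auto simp: zigzag_def elim!: oddE)
    then show ?thesis
      using n False cyclic_norm_eq_min[of "int h - 1" n] by (simp add: cdist_eq_cyclic_norm)
  qed
qed

definition zigzag_square :: "nat \<Rightarrow> nat \<Rightarrow> nat \<Rightarrow> nat" where
  "zigzag_square n i j = Suc ((zigzag n (i - 1) + zigzag n (j - 1)) mod n)"

lemma zigzag_square_commute: "zigzag_square n i j = zigzag_square n j i"
  by (simp add: zigzag_square_def add.commute)

lemma bij_betw_zigzag_square_row:
  assumes "n > 0"
  shows "bij_betw (zigzag_square n i) {1..n} {1..n}"
proof -
  have "inj_on (zigzag_square n i) {1..n}"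
  proof (intro inj_onI)
    fix j j' assume j: "j \<in> {1..n}" "j' \<in> {1..n}" "zigzag_square n i j = zigzag_square n i j'"
    then have "[zigzag n (j - 1) = zigzag n (j' - 1)] (mod n)"
      by (simp add: zigzag_square_def cong_add_lcancel_nat flip: cong_def)
    moreover have "zigzag n (j - 1) < n" "zigzag n (j' - 1) < n"
      using j assms by (auto intro!: zigzag_less)
    ultimately have "zigzag n (j - 1) = zigzag n (j' - 1)"
      by (rule cong_less_modulus_unique_nat)
    then have "j - 1 = j' - 1"
      using j inj_on_zigzag[of n] by (auto dest: inj_onD)
    then show "j = j'"
      using j by auto
  qed
  moreover have "zigzag_square n i ` {1..n} \<subseteq> {1..n}"
    using assms by (auto simp: zigzag_square_def Suc_le_eq)
  ultimately show ?thesis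
    by (simp add: bij_betw_def endo_inj_surj)
qed

lemma latin_square_zigzag_square: "n > 0 \<Longrightarrow> latin_square n (zigzag_square n)"
  using bij_betw_zigzag_square_row
  unfolding latin_square_def by (subst zigzag_square_commute) auto

lemma cdist_zigzag_square_Suc:
  assumes "n > 0" "j \<ge> 1"
  shows "cdist n (zigzag_square n i j) (zigzag_square n i (Suc j)) =
    (if even n \<and> odd j then n div 2 else (n - 1) div 2)"
proof -
  have "cdist n (zigzag_square n i j) (zigzag_square n i (Suc j)) =
      cdist n (zigzag n (j - 1)) (zigzag n (Suc (j - 1)))"
    using assms(2) by (simp add: zigzag_square_def cdist_Suc_mod cdist_add_left)
  then show ?thesis
    using assms cdist_zigzag_Suc[of n "j - 1"] by simp
qed

lemma inner_distance_zigzag_square: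
  assumes n: "n \<ge> 3"
  shows "inner_distance n (zigzag_square n) = (n - 1) div 2"
proof -
  have "n \<ge> 2"
    using n by simp
  show ?thesis
    unfolding inner_distance_eq_iff[OF \<open>n \<ge> 2\<close>]
  proof (intro conjI allI impI)
    have row: "(n - 1) div 2 \<le> cdist n (zigzag_square n i j) (zigzag_square n i (Suc j))"
      if "j \<ge> 1" for i j
      using that n cdist_zigzag_square_Suc[of n j i] by (simp add: div_le_mono)
    fix i j i' j' assume "((i, j), (i', j')) \<in> adjacent_cells n"
    then consider "i' = i" "j' = Suc j" "j \<ge> 1" | "j' = j" "i' = Suc i" "i \<ge> 1"
      by (auto simp: adjacent_cells_def)
    then show "(n - 1) div 2 \<le> cdist n (zigzag_square n i j) (zigzag_square n i' j')"
    proof cases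
      case 1
      then show ?thesis
        using row by simp
    next
      case 2
      then show ?thesis
        using row[of i j] by (simp only: zigzag_square_commute[of n _ j])
    qed
  next
    have "((1, 2), (1, 3)) \<in> adjacent_cells n"
      using n by (force simp: adjacent_cells_def)
    moreover have "cdist n (zigzag_square n 1 2) (zigzag_square n 1 3) = (n - 1) div 2"
      using n cdist_zigzag_square_Suc[of n 2 1] by (simp add: numeral_eq_Suc)
    ultimately show "\<exists>i j i' j'. ((i, j), (i', j')) \<in> adjacent_cells n \<and>
        cdist n (zigzag_square n i j) (zigzag_square n i' j') = (n - 1) div 2"
      by blast
  qed
qed

theorem mainTheorem10:
  fixes n :: nat
  assumes "n \<ge> 5"
  shows "(\<forall>k::nat. 1 \<le> k \<and> k \<le> (n - 1) div 2 \<longrightarrow>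
            (\<exists>L. latin_square n L \<and> inner_distance n L = k))
       \<and> (\<forall>L k k'. latin_square n L \<and> inner_distance n L = k \<and> 1 \<le> k' \<and> k' < k \<longrightarrow>
            (\<exists>\<sigma>. \<sigma> permutes {1..n} \<and>
                  inner_distance n (\<lambda>i j. \<sigma> (L i j)) = k'))"
proof (intro conjI allI impI)
  have n: "n \<ge> 2" "n \<ge> 3" "n > 0"
    using assms by simp_all
  fix k :: nat assume k: "1 \<le> k \<and> k \<le> (n - 1) div 2"
  have zigzag: "latin_square n (zigzag_square n)"
    "inner_distance n (zigzag_square n) = (n - 1) div 2"
    using latin_square_zigzag_square[OF n(3)] inner_distance_zigzag_square[OF n(2)] .
  show "\<exists>L. latin_square n L \<and> inner_distance n L = k"
  proof (cases "k = (n - 1) div 2")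
    case True
    then show ?thesis
      using zigzag by blast
  next
    case False
    then show ?thesis
      using inner_distance_reduce[OF n(1) zigzag, of k] k latin_square_permute[OF zigzag(1)] by auto
  qed
next
  fix L k k' assume "latin_square n L \<and> inner_distance n L = k \<and> 1 \<le> k' \<and> k' < k"
  then show "\<exists>\<sigma>. \<sigma> permutes {1..n} \<and> inner_distance n (\<lambda>i j. \<sigma> (L i j)) = k'"
    using inner_distance_reduce[of n L k k'] assms by auto
qed

end
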